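(* In any quantum resource theory, for every state $\rho_A$ and every channel $\mathcal{M}_{A\to B}$, $$D_{\max}^{\mathfrak{F}}(\mathcal{M}_{A\to B}(\rho_A))\le D_{\max}^{\mathfrak{F}}(\rho_A)+D_{\max}^{\mathfrak{F}}(\mathcal{M}_{A\to B}).$$
   Context: A quantum resource theory specifies sets $\mathfrak{F}(A)$ of free states and $\mathfrak{F}(A\to B)$ of free channels such that applying a free channel to a free state yields a free state. The max-relative entropy of states is $D_{\max}(\rho\Vert\sigma)=\log\min\{\lambda:\rho\le\lambda\sigma\}$ if $\operatorname{supp}\rho\subseteq\operatorname{supp}\sigma$ and $+\infty$ otherwise. For channels, $D_{\max}(\mathcal{M}_{A\to B}\Vert\mathcal{N}_{A\to B})=\sup_{\rho_{RA}}D_{\max}((\mathcal{I}_R\otimes\mathcal{M}_{A\to B})(\rho_{RA})\Vert(\mathcal{I}_R\otimes\mathcal{N}_{A\to B})(\rho_{RA}))$, the supremum over all reference systems $R$ and states $\rho_{RA}$. The resource measures are $D_{\max}^{\mathfrak{F}}(\rho_A)=\inf_{\omega_A\in\mathfrak{F}(A)}D_{\max}(\rho_A\Vert\omega_A)$ and $D_{\max}^{\mathfrak{F}}(\mathcal{M}_{A\to B})=\inf_{\mathcal{N}_{A\to B}\in\mathfrak{F}(A\to B)}D_{\max}(\mathcal{M}_{A\to B}\Vert\mathcal{N}_{A\to B})$. *)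

theory Defs
  imports "Jordan_Normal_Form.Matrix" "HOL-Library.Extended_Real"
begin

text \<open>Finite-dimensional quantum systems: an n-dimensional system has operators
  in carrier_mat n n over the complex numbers.\<close>

definition mtrace :: "complex mat \<Rightarrow> complex" where
  "mtrace A = (\<Sum>i<dim_row A. A $$ (i, i))"

text \<open>Positive semidefinite n x n matrix (Hermitian, nonnegative quadratic form;
  the order on complex numbers is the one of HOL-Library.Complex_Order).\<close>
definition psd :: "nat \<Rightarrow> complex mat \<Rightarrow> bool" where
  "psd n A \<longleftrightarrow> A \<in> carrier_mat n n
     \<and> (\<forall>i<n. \<forall>j<n. A $$ (i, j) = cnj (A $$ (j, i)))
     \<and> (\<forall>v \<in> carrier_vec n. conjugate v \<bullet> (A *\<^sub>v v) \<ge> 0)"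

definition loewner_le :: "nat \<Rightarrow> complex mat \<Rightarrow> complex mat \<Rightarrow> bool" where
  "loewner_le n A B \<longleftrightarrow> psd n (B - A)"

definition density :: "nat \<Rightarrow> complex mat \<Rightarrow> bool" where
  "density n \<rho> \<longleftrightarrow> psd n \<rho> \<and> mtrace \<rho> = 1"

definition supp :: "nat \<Rightarrow> complex mat \<Rightarrow> complex vec set" where
  "supp n A = {A *\<^sub>v v | v. v \<in> carrier_vec n}"

definition Dmax_st :: "nat \<Rightarrow> complex mat \<Rightarrow> complex mat \<Rightarrow> ereal" where
  "Dmax_st n \<rho> \<sigma> =
     (if supp n \<rho> \<subseteq> supp n \<sigma>
      then ereal (log 2 (LEAST t::real. loewner_le n \<rho> (complex_of_real t \<cdot>\<^sub>m \<sigma>)))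
      else \<infinity>)"

text \<open>The (dA x dA)-block (a,b) of an (r*dA) x (r*dA) matrix on R \<otimes> A
  (R the outer tensor factor).\<close>
definition block :: "nat \<Rightarrow> complex mat \<Rightarrow> nat \<Rightarrow> nat \<Rightarrow> complex mat" where
  "block dA X a b = mat dA dA (\<lambda>(k, l). X $$ (a * dA + k, b * dA + l))"

text \<open>(I_R \<otimes> M)(X) for a reference system R of dimension r: applies M blockwise,
  i.e. maps |a><b| \<otimes> Y to |a><b| \<otimes> M(Y).\<close>
definition tensor_id :: "nat \<Rightarrow> nat \<Rightarrow> nat \<Rightarrow> (complex mat \<Rightarrow> complex mat) \<Rightarrow> complex mat \<Rightarrow> complex mat" where
  "tensor_id r dA dB M X =
     mat (r * dB) (r * dB) (\<lambda>(i, j). M (block dA X (i div dB) (j div dB)) $$ (i mod dB, j mod dB))"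

definition is_channel :: "nat \<Rightarrow> nat \<Rightarrow> (complex mat \<Rightarrow> complex mat) \<Rightarrow> bool" where
  "is_channel dA dB M \<longleftrightarrow>
     (\<forall>X \<in> carrier_mat dA dA. M X \<in> carrier_mat dB dB)
   \<and> (\<forall>X \<in> carrier_mat dA dA. \<forall>Y \<in> carrier_mat dA dA. M (X + Y) = M X + M Y)
   \<and> (\<forall>X \<in> carrier_mat dA dA. \<forall>c::complex. M (c \<cdot>\<^sub>m X) = c \<cdot>\<^sub>m M X)
   \<and> (\<forall>X \<in> carrier_mat dA dA. mtrace (M X) = mtrace X)
   \<and> (\<forall>r X. psd (r * dA) X \<longrightarrow> psd (r * dB) (tensor_id r dA dB M X))"

definition Dmax_ch :: "nat \<Rightarrow> nat \<Rightarrow> (complex mat \<Rightarrow> complex mat) \<Rightarrow> (complex mat \<Rightarrow> complex mat) \<Rightarrow> ereal" where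
  "Dmax_ch dA dB M N =
     (SUP (r, \<rho>) \<in> {(r, \<rho>). density (r * dA) \<rho>}.
        Dmax_st (r * dB) (tensor_id r dA dB M \<rho>) (tensor_id r dA dB N \<rho>))"

definition resource_theory ::
  "('s \<Rightarrow> nat) \<Rightarrow> ('s \<Rightarrow> complex mat set) \<Rightarrow> ('s \<Rightarrow> 's \<Rightarrow> (complex mat \<Rightarrow> complex mat) set) \<Rightarrow> bool" where
  "resource_theory sdim FS FC \<longleftrightarrow>
     (\<forall>A. FS A \<subseteq> {\<rho>. density (sdim A) \<rho>})
   \<and> (\<forall>A B. FC A B \<subseteq> {M. is_channel (sdim A) (sdim B) M})
   \<and> (\<forall>A B N \<omega>. N \<in> FC A B \<longrightarrow> \<omega> \<in> FS A \<longrightarrow> N \<omega> \<in> FS B)"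

definition Dmax_free_st :: "('s \<Rightarrow> nat) \<Rightarrow> ('s \<Rightarrow> complex mat set) \<Rightarrow> 's \<Rightarrow> complex mat \<Rightarrow> ereal" where
  "Dmax_free_st sdim FS A \<rho> = (INF \<omega> \<in> FS A. Dmax_st (sdim A) \<rho> \<omega>)"

definition Dmax_free_ch ::
  "('s \<Rightarrow> nat) \<Rightarrow> ('s \<Rightarrow> 's \<Rightarrow> (complex mat \<Rightarrow> complex mat) set) \<Rightarrow> 's \<Rightarrow> 's \<Rightarrow> (complex mat \<Rightarrow> complex mat) \<Rightarrow> ereal" where
  "Dmax_free_ch sdim FC A B M = (INF N \<in> FC A B. Dmax_ch (sdim A) (sdim B) M N)"

end

theory Submission
  imports Defs "Jordan_Normal_Form.Gauss_Jordan_Elimination"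
begin

text \<open>If \<open>\<rho> \<le> 2\<^sup>a \<omega>\<close> and \<open>M \<omega> \<le> 2\<^sup>b N \<omega>\<close> in the Loewner order, with \<open>\<omega>\<close> a free state
  and \<open>N\<close> a free channel, then positivity of \<open>M\<close> gives \<open>M \<rho> \<le> 2\<^sup>a M \<omega> \<le> 2\<^sup>a\<^sup>+\<^sup>b N \<omega>\<close>,
  and \<open>N \<omega>\<close> is free; moreover \<open>D\<^sub>m\<^sub>a\<^sub>x(M \<omega> \<parallel> N \<omega>) \<le> D\<^sub>m\<^sub>a\<^sub>x(M \<parallel> N)\<close> by taking a trivial
  reference system. Taking infima over \<open>\<omega>\<close> and \<open>N\<close> gives the claim.

  Since \<open>D\<^sub>m\<^sub>a\<^sub>x\<close> is the logarithm of a \<open>LEAST\<close> over the reals, this needs some matrix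
  analysis: a Loewner bound \<open>\<rho> \<le> t \<omega>\<close> forces \<open>ker \<omega> \<subseteq> ker \<rho>\<close> and hence inclusion of supports;
  conversely, inclusion of supports yields some Loewner bound (through a generalized inverse
  of \<open>\<omega>\<close> and Cauchy--Schwarz); and for states the set of admissible factors \<open>t\<close> is closed
  and bounded below by 1 (compare traces), so its least element exists.\<close>

lemma ereal_le_INF_add_INF:
  fixes f g :: "_ \<Rightarrow> ereal"
  assumes le: "\<And>x y. x \<in> X \<Longrightarrow> y \<in> Y \<Longrightarrow> c \<le> f x + g y"
    and f: "\<And>x. x \<in> X \<Longrightarrow> 0 \<le> f x" and g: "\<And>y. y \<in> Y \<Longrightarrow> 0 \<le> g y"
  shows "c \<le> (INF x\<in>X. f x) + (INF y\<in>Y. g y)"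
proof -
  have "0 \<le> (INF x\<in>X. f x)" "0 \<le> (INF y\<in>Y. g y)"
    using f g by (auto intro: INF_greatest)
  show ?thesis
  proof (cases "X = {} \<or> Y = {}")
    case True
    then show ?thesis using \<open>0 \<le> (INF x\<in>X. f x)\<close> \<open>0 \<le> (INF y\<in>Y. g y)\<close>
      by (auto simp: top_ereal_def)
  next
    case False
    have "c \<le> (INF x\<in>X. INF y\<in>Y. f x + g y)"
      using le by (intro INF_greatest) auto
    also have "\<dots> = (INF x\<in>X. f x + (INF y\<in>Y. g y))"
    proof (rule INF_cong[OF refl])
      fix x assume "x \<in> X"
      then have "f x \<noteq> -\<infinity>" using f[of x] by auto
      then show "(INF y\<in>Y. f x + g y) = f x + (INF y\<in>Y. g y)"
        using False g by (intro INF_ereal_add_right) auto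
    qed
    also have "\<dots> = (INF x\<in>X. f x) + (INF y\<in>Y. g y)"
      using False f \<open>0 \<le> (INF y\<in>Y. g y)\<close> by (intro INF_ereal_add_left) auto
    finally show ?thesis .
  qed
qed

section \<open>Generalized inverses\<close>

lemma row_echelon_generalized_inverse:
  fixes R :: "'a :: field mat"
  assumes R: "R \<in> carrier_mat n n" and "row_echelon_form R"
  shows "\<exists>H \<in> carrier_mat n n. R * H * R = R"
proof -
  obtain f where "pivot_fun R f n"
    using assms unfolding row_echelon_form_def by auto
  note pivot = pivot_funD[OF carrier_matD(1)[OF R] this]
  \<comment> \<open>\<open>R * H\<close> is then the diagonal projection onto the rows that carry a pivot.\<close>
  define H where "H = mat n n (\<lambda>(j, i). if f i < n \<and> j = f i then 1 else 0 :: 'a)"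
  have H: "H \<in> carrier_mat n n" unfolding H_def by simp
  have RH: "(R * H) $$ (k, i) = (if f i < n \<and> k = i then 1 else 0)" if k: "k < n" and i: "i < n" for k i
  proof -
    have "(R * H) $$ (k, i) = (\<Sum>j<n. R $$ (k, j) * H $$ (j, i))"
      using R H k i by (simp add: scalar_prod_def atLeast0LessThan)
    also have "\<dots> = (\<Sum>j<n. if j = f i then (if f i < n then R $$ (k, j) else 0) else 0)"
      by (intro sum.cong refl) (use i in \<open>auto simp: H_def\<close>)
    also have "\<dots> = (if f i < n then R $$ (k, f i) else 0)"
      by (simp add: sum.delta')
    also have "\<dots> = (if f i < n \<and> k = i then 1 else 0)"
      using pivot(4)[OF i] pivot(5)[OF i _ k] by auto
    finally show ?thesis .
  qed
  have "R * H * R = R"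
  proof (rule eq_matI)
    fix k l assume "k < dim_row R" "l < dim_col R"
    then have k: "k < n" and l: "l < n" using R by auto
    have "(R * H * R) $$ (k, l) = row (R * H) k \<bullet> col R l"
      by (rule index_mult_mat) (use R H k l in auto)
    also have "\<dots> = (\<Sum>i<n. (R * H) $$ (k, i) * R $$ (i, l))"
      unfolding scalar_prod_def using R H k l by (auto simp: atLeast0LessThan intro!: sum.cong)
    also have "\<dots> = (\<Sum>i<n. if i = k then (if f k < n then R $$ (i, l) else 0) else 0)"
      by (intro sum.cong refl) (use k in \<open>auto simp: RH\<close>)
    also have "\<dots> = (if f k < n then R $$ (k, l) else 0)"
      using k by (simp add: sum.delta')
    also have "\<dots> = R $$ (k, l)"
      using pivot(1)[OF k] pivot(2)[OF k, of l] l by (cases "f k < n") auto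
    finally show "(R * H * R) $$ (k, l) = R $$ (k, l)" .
  qed (use R H in auto)
  then show ?thesis using H by blast
qed

lemma generalized_inverse_exists:
  fixes A :: "'a :: field mat"
  assumes A: "A \<in> carrier_mat n n"
  shows "\<exists>G \<in> carrier_mat n n. A * G * A = A"
proof -
  define C where "C = gauss_jordan_single A"
  note C = gauss_jordan_single[OF A C_def[symmetric]]
  obtain P Q where CPA: "C = P * A" and P: "P \<in> carrier_mat n n" and Q: "Q \<in> carrier_mat n n"
    and QP: "Q * P = 1\<^sub>m n"
    using C(4) by blast
  obtain H where H: "H \<in> carrier_mat n n" and CHC: "C * H * C = C"
    using row_echelon_generalized_inverse[OF C(2,3)] by blast
  have "Q * C = (Q * P) * A" unfolding CPA using Q P A by simp
  then have QC: "Q * C = A" using QP A by simp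
  have "A * (H * P) * A = Q * C * (H * P) * A" using QC by simp
  also have "\<dots> = Q * (C * H * (P * A))"
    using Q C(2) H P A by (simp add: assoc_mult_mat[of _ n n _ n _ n])
  also have "\<dots> = A" unfolding CPA[symmetric] CHC QC ..
  finally show ?thesis using H P by (intro bexI[of _ "H * P"]) auto
qed

section \<open>Sesquilinear calculus on coordinate vectors\<close>

text \<open>Vectors are functions \<open>nat \<Rightarrow> complex\<close> of which only the first \<open>n\<close> coordinates matter;
  this avoids the carrier bookkeeping of \<open>vec\<close>.\<close>

definition cinner :: "nat \<Rightarrow> (nat \<Rightarrow> complex) \<Rightarrow> (nat \<Rightarrow> complex) \<Rightarrow> complex" where
  "cinner n x y = (\<Sum>i<n. cnj (x i) * y i)"

definition sqnorm :: "nat \<Rightarrow> (nat \<Rightarrow> complex) \<Rightarrow> real" where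
  "sqnorm n x = (\<Sum>i<n. (cmod (x i))\<^sup>2)"

definition mat_app :: "nat \<Rightarrow> complex mat \<Rightarrow> (nat \<Rightarrow> complex) \<Rightarrow> nat \<Rightarrow> complex" where
  "mat_app n A x = (\<lambda>i. \<Sum>j<n. A $$ (i, j) * x j)"

definition quad_form :: "nat \<Rightarrow> complex mat \<Rightarrow> (nat \<Rightarrow> complex) \<Rightarrow> complex" where
  "quad_form n A x = cinner n x (mat_app n A x)"

definition mat_adj :: "nat \<Rightarrow> complex mat \<Rightarrow> complex mat" where
  "mat_adj n A = mat n n (\<lambda>(i, j). cnj (A $$ (j, i)))"

definition hermitian :: "nat \<Rightarrow> complex mat \<Rightarrow> bool" where
  "hermitian n A \<longleftrightarrow> (\<forall>i<n. \<forall>j<n. A $$ (i, j) = cnj (A $$ (j, i)))"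

lemma cinner_cong:
  "(\<And>i. i < n \<Longrightarrow> x i = x' i) \<Longrightarrow> (\<And>i. i < n \<Longrightarrow> y i = y' i) \<Longrightarrow> cinner n x y = cinner n x' y'"
  unfolding cinner_def by (rule sum.cong) auto

lemma mat_app_cong: "(\<And>i. i < n \<Longrightarrow> x i = x' i) \<Longrightarrow> mat_app n A x = mat_app n A x'"
  unfolding mat_app_def by (intro ext sum.cong) auto

lemma cinner_commute: "cinner n y x = cnj (cinner n x y)"
  unfolding cinner_def by (simp add: mult.commute)

lemma cinner_self: "cinner n x x = complex_of_real (sqnorm n x)"
proof -
  have "cinner n x x = (\<Sum>i<n. complex_of_real ((cmod (x i))\<^sup>2))"
    unfolding cinner_def by (intro sum.cong refl) (metis complex_norm_square mult.commute)
  then show ?thesis unfolding sqnorm_def by simp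
qed

lemma sqnorm_nonneg: "0 \<le> sqnorm n x"
  unfolding sqnorm_def by (simp add: sum_nonneg)

lemma sqnorm_eq_0D: "sqnorm n x = 0 \<Longrightarrow> i < n \<Longrightarrow> x i = 0"
  unfolding sqnorm_def by (simp add: sum_nonneg_eq_0_iff)

lemma cinner_add_left: "cinner n (\<lambda>i. x i + y i) z = cinner n x z + cinner n y z"
  unfolding cinner_def by (simp add: distrib_right sum.distrib)

lemma cinner_add_right: "cinner n x (\<lambda>i. y i + z i) = cinner n x y + cinner n x z"
  unfolding cinner_def by (simp add: distrib_left sum.distrib)

lemma cinner_diff_left: "cinner n (\<lambda>i. x i - y i) z = cinner n x z - cinner n y z"
  unfolding cinner_def by (simp add: left_diff_distrib sum_subtractf)

lemma cinner_diff_right: "cinner n x (\<lambda>i. y i - z i) = cinner n x y - cinner n x z"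
  unfolding cinner_def by (simp add: right_diff_distrib sum_subtractf)

lemma cinner_scale_left: "cinner n (\<lambda>i. c * x i) y = cnj c * cinner n x y"
  unfolding cinner_def by (simp add: sum_distrib_left algebra_simps)

lemma cinner_scale_right: "cinner n x (\<lambda>i. c * y i) = c * cinner n x y"
  unfolding cinner_def by (simp add: sum_distrib_left algebra_simps)

lemma cinner_zero_right: "(\<And>i. i < n \<Longrightarrow> y i = 0) \<Longrightarrow> cinner n x y = 0"
  unfolding cinner_def by (intro sum.neutral) auto

lemma mat_app_add: "mat_app n A (\<lambda>i. x i + y i) = (\<lambda>i. mat_app n A x i + mat_app n A y i)"
  unfolding mat_app_def by (simp add: distrib_left sum.distrib)

lemma mat_app_diff: "mat_app n A (\<lambda>i. x i - y i) = (\<lambda>i. mat_app n A x i - mat_app n A y i)"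
  unfolding mat_app_def by (simp add: right_diff_distrib sum_subtractf)

lemma mat_app_scale: "mat_app n A (\<lambda>i. c * x i) = (\<lambda>i. c * mat_app n A x i)"
  unfolding mat_app_def by (simp add: sum_distrib_left algebra_simps)

lemma mat_app_mult:
  assumes "A \<in> carrier_mat n n" "B \<in> carrier_mat n n" "i < n"
  shows "mat_app n (A * B) x i = mat_app n A (mat_app n B x) i"
proof -
  have "mat_app n (A * B) x i = (\<Sum>j<n. (\<Sum>k<n. A $$ (i, k) * B $$ (k, j)) * x j)"
    unfolding mat_app_def using assms
    by (intro sum.cong) (auto simp: scalar_prod_def atLeast0LessThan)
  also have "\<dots> = (\<Sum>j<n. \<Sum>k<n. A $$ (i, k) * (B $$ (k, j) * x j))"
    by (simp add: sum_distrib_right mult.assoc)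
  also have "\<dots> = (\<Sum>k<n. \<Sum>j<n. A $$ (i, k) * (B $$ (k, j) * x j))"
    by (rule sum.swap)
  also have "\<dots> = mat_app n A (mat_app n B x) i"
    unfolding mat_app_def by (simp add: sum_distrib_left)
  finally show ?thesis .
qed

lemma cinner_mat_adj_right: "cinner n x (mat_app n A y) = cinner n (mat_app n (mat_adj n A) x) y"
proof -
  have "cinner n x (mat_app n A y) = (\<Sum>i<n. \<Sum>j<n. cnj (x i) * (A $$ (i, j) * y j))"
    unfolding cinner_def mat_app_def by (simp add: sum_distrib_left)
  also have "\<dots> = (\<Sum>j<n. \<Sum>i<n. cnj (mat_adj n A $$ (j, i) * x i) * y j)"
    by (subst sum.swap) (intro sum.cong refl; simp add: mat_adj_def)
  also have "\<dots> = cinner n (mat_app n (mat_adj n A) x) y"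
    unfolding cinner_def mat_app_def by (simp add: sum_distrib_right)
  finally show ?thesis .
qed

lemma cinner_mat_adj_left: "cinner n (mat_app n A x) y = cinner n x (mat_app n (mat_adj n A) y)"
proof -
  have "cinner n (mat_app n A x) y = cnj (cinner n y (mat_app n A x))"
    by (rule cinner_commute)
  also have "\<dots> = cnj (cinner n (mat_app n (mat_adj n A) y) x)"
    by (simp only: cinner_mat_adj_right)
  finally show ?thesis
    by (simp only: cinner_commute[of n x])
qed

lemma mat_app_mat_adj_hermitian:
  "hermitian n A \<Longrightarrow> i < n \<Longrightarrow> mat_app n (mat_adj n A) x i = mat_app n A x i"
  unfolding mat_app_def hermitian_def mat_adj_def
  by (intro sum.cong refl) (metis index_mat(1) lessThan_iff case_prod_conv)

lemma cinner_hermitian: "hermitian n A \<Longrightarrow> cinner n x (mat_app n A y) = cinner n (mat_app n A x) y"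
  unfolding cinner_mat_adj_right by (rule cinner_cong) (auto simp: mat_app_mat_adj_hermitian)

lemma mult_mat_vec_eq_mat_app:
  "A \<in> carrier_mat n n \<Longrightarrow> v \<in> carrier_vec n \<Longrightarrow> A *\<^sub>v v = vec n (mat_app n A (($) v))"
  unfolding mat_app_def scalar_prod_def mult_mat_vec_def
  by (auto simp: atLeast0LessThan intro!: sum.cong)

lemma quad_form_add_scaled:
  "quad_form n A (\<lambda>i. u i + l * v i) =
     quad_form n A u + l * cinner n u (mat_app n A v) + cnj l * cinner n v (mat_app n A u)
     + cnj l * l * quad_form n A v"
  unfolding quad_form_def mat_app_add mat_app_scale cinner_add_left cinner_add_right
    cinner_scale_left cinner_scale_right
  by (simp add: algebra_simps)

lemma quad_form_unit_vec:
  assumes "i < n"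
  shows "quad_form n A (\<lambda>j. of_bool (j = i)) = A $$ (i, i)"
proof -
  have "mat_app n A (\<lambda>j. of_bool (j = i)) = (\<lambda>k. A $$ (k, i))"
    unfolding mat_app_def using assms by (simp add: sum.If_cases)
  moreover have "(\<Sum>k<n. cnj (of_bool (k = i)) * A $$ (k, i)) = (\<Sum>k<n. if k = i then A $$ (k, i) else 0)"
    by (intro sum.cong) auto
  ultimately show ?thesis
    unfolding quad_form_def cinner_def using assms by (simp add: sum.delta')
qed

lemma mtrace_eq_sum_quad_form:
  "A \<in> carrier_mat n n \<Longrightarrow> mtrace A = (\<Sum>i<n. quad_form n A (\<lambda>j. of_bool (j = i)))"
  unfolding mtrace_def by (auto simp: quad_form_unit_vec intro!: sum.cong)

lemma psd_iff_quad_form: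
  "psd n A \<longleftrightarrow> A \<in> carrier_mat n n \<and> hermitian n A \<and> (\<forall>x. 0 \<le> quad_form n A x)"
proof -
  have "conjugate v \<bullet> (A *\<^sub>v v) = quad_form n A (($) v)" if "A \<in> carrier_mat n n" "v \<in> carrier_vec n" for v
    using that unfolding quad_form_def cinner_def mat_app_def scalar_prod_def mult_mat_vec_def
    by (auto simp: atLeast0LessThan intro!: sum.cong)
  moreover have "quad_form n A (($) (vec n x)) = quad_form n A x" for x
  proof -
    have "mat_app n A (($) (vec n x)) = mat_app n A x" by (rule mat_app_cong) simp
    then show ?thesis unfolding quad_form_def by (intro cinner_cong) auto
  qed
  ultimately show ?thesis
    unfolding psd_def hermitian_def by (metis vec_carrier)
qed

lemma psd_quad_form_nonneg: "psd n A \<Longrightarrow> 0 \<le> Re (quad_form n A x)"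
  unfolding psd_iff_quad_form less_eq_complex_def by auto

lemma psd_quad_form_Im: "psd n A \<Longrightarrow> Im (quad_form n A x) = 0"
  unfolding psd_iff_quad_form less_eq_complex_def by auto

lemma real_quadratic_nonneg_imp_le:
  fixes a b c :: real
  assumes nonneg: "\<And>s. 0 \<le> a - 2 * s * b + s\<^sup>2 * b * c" and "0 \<le> c"
  shows "b \<le> a * c"
proof (cases "c = 0")
  case True
  show ?thesis
  proof (rule ccontr)
    assume "\<not> b \<le> a * c"
    then have "b > 0" using True by simp
    have "0 \<le> a - 2 * ((a + 1) / (2 * b)) * b + ((a + 1) / (2 * b))\<^sup>2 * b * c" by (rule nonneg)
    also have "\<dots> = -1" using \<open>b > 0\<close> True by (simp add: field_simps)
    finally show False by simp
  qed
next
  case False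
  then have "c > 0" using \<open>0 \<le> c\<close> by simp
  have "0 \<le> a - 2 * (1 / c) * b + (1 / c)\<^sup>2 * b * c" by (rule nonneg)
  also have "\<dots> = a - b / c" using \<open>c > 0\<close> by (simp add: field_simps power2_eq_square)
  finally show ?thesis using \<open>c > 0\<close> by (simp add: field_simps)
qed

lemma psd_cauchy_schwarz:
  assumes "psd n A"
  shows "(cmod (cinner n u (mat_app n A v)))\<^sup>2 \<le> Re (quad_form n A u) * Re (quad_form n A v)"
proof -
  define b where "b = cinner n u (mat_app n A v)"
  have "hermitian n A" using assms unfolding psd_iff_quad_form by simp
  then have vu: "cinner n v (mat_app n A u) = cnj b"
    unfolding b_def by (metis cinner_commute cinner_hermitian)
  have "0 \<le> Re (quad_form n A u) - 2 * s * (cmod b)\<^sup>2 + s\<^sup>2 * (cmod b)\<^sup>2 * Re (quad_form n A v)"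
    for s :: real
  proof -
    have "0 \<le> Re (quad_form n A (\<lambda>i. u i + (- (complex_of_real s * cnj b)) * v i))"
      by (rule psd_quad_form_nonneg[OF assms])
    also have "quad_form n A (\<lambda>i. u i + (- (complex_of_real s * cnj b)) * v i) =
        quad_form n A u - 2 * s * (b * cnj b) + s\<^sup>2 * (b * cnj b) * quad_form n A v"
      unfolding quad_form_add_scaled vu b_def[symmetric] by (simp add: algebra_simps power2_eq_square)
    finally show ?thesis by (simp flip: complex_norm_square)
  qed
  then show ?thesis
    unfolding b_def[symmetric] by (rule real_quadratic_nonneg_imp_le) (rule psd_quad_form_nonneg[OF assms])
qed

lemma psd_mat_app_eq_0:
  assumes "psd n A" "Re (quad_form n A x) = 0" "i < n"
  shows "mat_app n A x i = 0"
proof -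
  have "(cmod (cinner n (mat_app n A x) (mat_app n A x)))\<^sup>2 = 0"
    using psd_cauchy_schwarz[OF assms(1), of "mat_app n A x" x] assms(2) by simp
  then have "sqnorm n (mat_app n A x) = 0" by (simp add: cinner_self)
  then show ?thesis using sqnorm_eq_0D assms(3) by blast
qed

lemma quad_form_bound: "\<exists>K\<ge>0. \<forall>x. cmod (quad_form n A x) \<le> K * sqnorm n x"
proof (intro exI[of _ "\<Sum>i<n. \<Sum>j<n. cmod (A $$ (i, j))"] conjI allI)
  fix x
  have entry: "cmod (x i) * cmod (x j) \<le> sqnorm n x" if "i < n" "j < n" for i j
  proof -
    have "(cmod (x k))\<^sup>2 \<le> sqnorm n x" if "k < n" for k
      unfolding sqnorm_def using that by (intro member_le_sum) auto
    from this[OF \<open>i < n\<close>] this[OF \<open>j < n\<close>] show ?thesis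
      using sum_squares_bound[of "cmod (x i)" "cmod (x j)"] by linarith
  qed
  have "cmod (quad_form n A x) = cmod (\<Sum>i<n. \<Sum>j<n. cnj (x i) * (A $$ (i, j) * x j))"
    unfolding quad_form_def cinner_def mat_app_def by (simp add: sum_distrib_left)
  also have "\<dots> \<le> (\<Sum>i<n. \<Sum>j<n. cmod (A $$ (i, j)) * (cmod (x i) * cmod (x j)))"
    by (rule order_trans[OF norm_sum sum_mono], rule order_trans[OF norm_sum])
       (simp add: norm_mult algebra_simps)
  also have "\<dots> \<le> (\<Sum>i<n. \<Sum>j<n. cmod (A $$ (i, j)) * sqnorm n x)"
    using entry by (intro sum_mono mult_left_mono) auto
  finally show "cmod (quad_form n A x) \<le> (\<Sum>i<n. \<Sum>j<n. cmod (A $$ (i, j))) * sqnorm n x"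
    by (simp add: sum_distrib_right)
qed (intro sum_nonneg norm_ge_zero)

lemma sqnorm_mat_app_bound:
  assumes "A \<in> carrier_mat n n"
  shows "\<exists>K\<ge>0. \<forall>x. sqnorm n (mat_app n A x) \<le> K * sqnorm n x"
proof -
  obtain K where "K \<ge> 0" and K: "\<And>x. cmod (quad_form n (mat_adj n A * A) x) \<le> K * sqnorm n x"
    using quad_form_bound by blast
  have "sqnorm n (mat_app n A x) = Re (quad_form n (mat_adj n A * A) x)" for x
  proof -
    have "complex_of_real (sqnorm n (mat_app n A x)) = cinner n x (mat_app n (mat_adj n A) (mat_app n A x))"
      by (simp flip: cinner_self add: cinner_mat_adj_left)
    also have "\<dots> = quad_form n (mat_adj n A * A) x"
      unfolding quad_form_def using assms
      by (intro cinner_cong) (auto simp: mat_app_mult mat_adj_def)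
    finally show ?thesis by (metis Re_complex_of_real)
  qed
  then show ?thesis
    using \<open>K \<ge> 0\<close> K complex_Re_le_cmod order_trans by metis
qed

lemma psd_sqnorm_mat_app_bound:
  assumes "psd n A"
  shows "\<exists>K\<ge>0. \<forall>x. sqnorm n (mat_app n A x) \<le> K * Re (quad_form n A x)"
proof -
  obtain K where "K \<ge> 0" and K: "\<And>x. cmod (quad_form n A x) \<le> K * sqnorm n x"
    using quad_form_bound by blast
  have "sqnorm n (mat_app n A x) \<le> K * Re (quad_form n A x)" for x
  proof -
    define s where "s = sqnorm n (mat_app n A x)"
    have "s\<^sup>2 = (cmod (cinner n (mat_app n A x) (mat_app n A x)))\<^sup>2"
      unfolding s_def cinner_self using sqnorm_nonneg by simp
    also have "\<dots> \<le> Re (quad_form n A (mat_app n A x)) * Re (quad_form n A x)"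
      by (rule psd_cauchy_schwarz[OF assms])
    also have "\<dots> \<le> (K * s) * Re (quad_form n A x)"
      unfolding s_def using K complex_Re_le_cmod psd_quad_form_nonneg[OF assms]
      by (intro mult_right_mono) (blast intro: order_trans)+
    finally have "s * s \<le> s * (K * Re (quad_form n A x))"
      by (simp add: power2_eq_square algebra_simps)
    moreover have "0 \<le> K * Re (quad_form n A x)"
      using \<open>K \<ge> 0\<close> psd_quad_form_nonneg[OF assms] by simp
    ultimately show ?thesis
      unfolding s_def[symmetric] using sqnorm_nonneg[of n "mat_app n A x"] s_def
      by (cases "s = 0") (auto simp: mult_le_cancel_left)
  qed
  then show ?thesis using \<open>K \<ge> 0\<close> by blast
qed

section \<open>Loewner order and supports\<close>

lemma loewner_le_iff_quad_form:
  assumes "psd n A" "psd n B"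
  shows "loewner_le n A (complex_of_real t \<cdot>\<^sub>m B) \<longleftrightarrow>
    (\<forall>x. Re (quad_form n A x) \<le> t * Re (quad_form n B x))"
proof -
  define C where "C = complex_of_real t \<cdot>\<^sub>m B - A"
  have A: "A \<in> carrier_mat n n" "hermitian n A" and B: "B \<in> carrier_mat n n" "hermitian n B"
    using assms unfolding psd_iff_quad_form by auto
  then have C: "C \<in> carrier_mat n n"
    and C_entry: "\<And>i j. i < n \<Longrightarrow> j < n \<Longrightarrow> C $$ (i, j) = complex_of_real t * B $$ (i, j) - A $$ (i, j)"
    unfolding C_def by auto
  have "hermitian n C"
    unfolding hermitian_def
  proof (intro allI impI)
    fix i j assume "i < n" "j < n"
    moreover have "A $$ (i, j) = cnj (A $$ (j, i))" "B $$ (i, j) = cnj (B $$ (j, i))"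
      using A(2) B(2) \<open>i < n\<close> \<open>j < n\<close> unfolding hermitian_def by blast+
    ultimately show "C $$ (i, j) = cnj (C $$ (j, i))" by (simp add: C_entry)
  qed
  moreover have "quad_form n C x = complex_of_real t * quad_form n B x - quad_form n A x" for x
  proof -
    have "mat_app n C x i = complex_of_real t * mat_app n B x i - mat_app n A x i" if "i < n" for i
      unfolding mat_app_def using that
      by (simp add: C_entry sum_subtractf sum_distrib_left algebra_simps)
    then have "quad_form n C x = cinner n x (\<lambda>i. complex_of_real t * mat_app n B x i - mat_app n A x i)"
      unfolding quad_form_def by (intro cinner_cong) auto
    then show ?thesis unfolding cinner_diff_right cinner_scale_right quad_form_def .
  qed
  ultimately have "loewner_le n A (complex_of_real t \<cdot>\<^sub>m B) \<longleftrightarrow>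
      (\<forall>x. 0 \<le> complex_of_real t * quad_form n B x - quad_form n A x)"
    unfolding loewner_le_def C_def[symmetric] psd_iff_quad_form using C by auto
  also have "\<dots> \<longleftrightarrow> (\<forall>x. Re (quad_form n A x) \<le> t * Re (quad_form n B x))"
    using psd_quad_form_Im[OF assms(1)] psd_quad_form_Im[OF assms(2)]
    by (simp add: less_eq_complex_def)
  finally show ?thesis .
qed

lemma loewner_le_trans_scaled:
  assumes "psd n A" "psd n B" "psd n C" "0 \<le> s"
    and "loewner_le n A (complex_of_real s \<cdot>\<^sub>m B)" "loewner_le n B (complex_of_real t \<cdot>\<^sub>m C)"
  shows "loewner_le n A (complex_of_real (s * t) \<cdot>\<^sub>m C)"
proof -
  have "Re (quad_form n A x) \<le> (s * t) * Re (quad_form n C x)" for x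
  proof -
    have "Re (quad_form n A x) \<le> s * Re (quad_form n B x)"
      using assms(5) loewner_le_iff_quad_form[OF assms(1,2)] by blast
    also have "\<dots> \<le> s * (t * Re (quad_form n C x))"
      using assms(6) loewner_le_iff_quad_form[OF assms(2,3)] \<open>0 \<le> s\<close>
      by (blast intro: mult_left_mono)
    finally show ?thesis by (simp add: mult.assoc)
  qed
  then show ?thesis using loewner_le_iff_quad_form[OF assms(1,3)] by blast
qed

lemma supp_subset_iff_mat_app:
  assumes "A \<in> carrier_mat n n" "B \<in> carrier_mat n n"
  shows "supp n A \<subseteq> supp n B \<longleftrightarrow> (\<forall>x. \<exists>y. \<forall>i<n. mat_app n A x i = mat_app n B y i)"
proof -
  have supp_eq: "supp n C = range (\<lambda>x. vec n (mat_app n C x))" if C: "C \<in> carrier_mat n n" for C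
  proof
    show "supp n C \<subseteq> range (\<lambda>x. vec n (mat_app n C x))"
      unfolding supp_def using C by (auto simp: mult_mat_vec_eq_mat_app)
  next
    show "range (\<lambda>x. vec n (mat_app n C x)) \<subseteq> supp n C"
    proof
      fix v assume "v \<in> range (\<lambda>x. vec n (mat_app n C x))"
      then obtain x where v: "v = vec n (mat_app n C x)" by blast
      have "mat_app n C (($) (vec n x)) = mat_app n C x" by (rule mat_app_cong) simp
      then have "v = C *\<^sub>v vec n x" using C v by (simp add: mult_mat_vec_eq_mat_app)
      then show "v \<in> supp n C" unfolding supp_def using vec_carrier by blast
    qed
  qed
  have "supp n A \<subseteq> supp n B \<longleftrightarrow> (\<forall>x. \<exists>y. vec n (mat_app n A x) = vec n (mat_app n B y))"
    unfolding supp_eq[OF assms(1)] supp_eq[OF assms(2)] by blast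
  then show ?thesis by (simp add: vec_eq_iff)
qed

lemma mat_app_generalized_inverse:
  assumes "B \<in> carrier_mat n n" "G \<in> carrier_mat n n" "B * G * B = B" "i < n"
  shows "mat_app n B (mat_app n G (mat_app n B x)) i = mat_app n B x i"
proof -
  have "mat_app n B x i = mat_app n (B * G) (mat_app n B x) i"
    using assms mat_app_mult[of "B * G" n B i x] by simp
  also have "\<dots> = mat_app n B (mat_app n G (mat_app n B x)) i"
    using assms by (intro mat_app_mult) auto
  finally show ?thesis by simp
qed

lemma loewner_le_kernel_subset:
  assumes "psd n A" "psd n B" "loewner_le n A (complex_of_real t \<cdot>\<^sub>m B)"
    and "\<forall>i<n. mat_app n B y i = 0" "i < n"
  shows "mat_app n A y i = 0"
proof -
  have "quad_form n B y = 0"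
    unfolding quad_form_def using assms(4) by (intro cinner_zero_right) auto
  then have "Re (quad_form n A y) \<le> 0"
    using assms(3) loewner_le_iff_quad_form[OF assms(1,2)] by (metis mult_zero_right zero_complex.simps(1))
  then have "Re (quad_form n A y) = 0"
    using psd_quad_form_nonneg[OF assms(1)] by (simp add: order_antisym)
  then show ?thesis by (rule psd_mat_app_eq_0[OF assms(1) _ assms(5)])
qed

lemma supp_subset_if_loewner_le:
  assumes A: "psd n A" and B: "psd n B" and le: "loewner_le n A (complex_of_real t \<cdot>\<^sub>m B)"
  shows "supp n A \<subseteq> supp n B"
proof -
  have A': "A \<in> carrier_mat n n" "hermitian n A" and B': "B \<in> carrier_mat n n" "hermitian n B"
    using A B unfolding psd_iff_quad_form by auto
  obtain G where G: "G \<in> carrier_mat n n" and BGB: "B * G * B = B"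
    using generalized_inverse_exists[OF B'(1)] by blast
  have A_GB: "mat_app n A y i = mat_app n A (mat_app n G (mat_app n B y)) i" if "i < n" for y i
  proof -
    define d where "d = (\<lambda>i. y i - mat_app n G (mat_app n B y) i)"
    have "\<forall>j<n. mat_app n B d j = 0"
      unfolding d_def mat_app_diff using mat_app_generalized_inverse[OF B'(1) G BGB] by simp
    then have "mat_app n A d i = 0" by (rule loewner_le_kernel_subset[OF A B le _ that])
    then show ?thesis unfolding d_def mat_app_diff by simp
  qed
  have "\<exists>y. \<forall>i<n. mat_app n A x i = mat_app n B y i" for x
  proof (intro exI allI impI)
    define y where "y = mat_app n (mat_adj n G) (mat_app n A x)"
    define e where "e = (\<lambda>i. mat_app n A x i - mat_app n B y i)"
    have "cinner n e v = 0" for v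
    proof -
      have "cinner n (mat_app n A x) v = cinner n x (mat_app n A v)"
        by (rule cinner_hermitian[OF A'(2), symmetric])
      also have "\<dots> = cinner n x (mat_app n A (mat_app n G (mat_app n B v)))"
        by (rule cinner_cong) (auto intro: A_GB)
      also have "\<dots> = cinner n y (mat_app n B v)"
        unfolding y_def cinner_hermitian[OF A'(2)] by (rule cinner_mat_adj_right)
      also have "\<dots> = cinner n (mat_app n B y) v"
        by (rule cinner_hermitian[OF B'(2)])
      finally show ?thesis unfolding e_def cinner_diff_left by simp
    qed
    then have "sqnorm n e = 0" using cinner_self[of n e] by simp
    then have "e i = 0" if "i < n" for i using sqnorm_eq_0D that by blast
    then show "mat_app n A x i = mat_app n B y i" if "i < n" for i
      using that unfolding e_def by simp
  qed
  then show ?thesis using supp_subset_iff_mat_app[OF A'(1) B'(1)] by blast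
qed

lemma quad_form_factor_through:
  assumes "psd n A" "hermitian n B"
    and A_BGA: "\<And>x i. i < n \<Longrightarrow> mat_app n A x i = mat_app n B (mat_app n G (mat_app n A x)) i"
  shows "quad_form n A x = quad_form n A (mat_app n (mat_adj n G) (mat_app n B x))"
proof -
  define z where "z = (\<lambda>u. mat_app n (mat_adj n G) (mat_app n B u))"
  have hA: "hermitian n A" using assms(1) unfolding psd_iff_quad_form by simp
  have z: "cinner n u (mat_app n A v) = cinner n (z u) (mat_app n A v)" for u v
  proof -
    have "cinner n u (mat_app n A v) = cinner n u (mat_app n B (mat_app n G (mat_app n A v)))"
      by (rule cinner_cong) (auto intro: A_BGA)
    also have "\<dots> = cinner n (z u) (mat_app n A v)"
      unfolding z_def cinner_hermitian[OF assms(2)] by (rule cinner_mat_adj_right)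
    finally show ?thesis .
  qed
  have "quad_form n A x = cinner n (mat_app n A (z x)) x"
    unfolding quad_form_def z[of x x] by (rule cinner_hermitian[OF hA])
  also have "\<dots> = cnj (quad_form n A (z x))"
    unfolding quad_form_def z[of x "z x", symmetric] by (rule cinner_commute)
  also have "\<dots> = quad_form n A (z x)"
    using psd_quad_form_Im[OF assms(1)] by (simp add: complex_eq_iff)
  finally show ?thesis unfolding z_def .
qed

lemma loewner_le_if_supp_subset:
  assumes A: "psd n A" and B: "psd n B" and supp: "supp n A \<subseteq> supp n B"
  shows "\<exists>t. loewner_le n A (complex_of_real t \<cdot>\<^sub>m B)"
proof -
  have A': "A \<in> carrier_mat n n" and B': "B \<in> carrier_mat n n" "hermitian n B"
    using A B unfolding psd_iff_quad_form by auto
  obtain G where G: "G \<in> carrier_mat n n" and BGB: "B * G * B = B"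
    using generalized_inverse_exists[OF B'(1)] by blast
  have "mat_app n A x i = mat_app n B (mat_app n G (mat_app n A x)) i" if "i < n" for x i
  proof -
    obtain y where y: "\<forall>i<n. mat_app n A x i = mat_app n B y i"
      using supp supp_subset_iff_mat_app[OF A' B'(1)] by blast
    then have "mat_app n G (mat_app n A x) = mat_app n G (mat_app n B y)"
      by (intro mat_app_cong) auto
    then show ?thesis using y that mat_app_generalized_inverse[OF B'(1) G BGB] by simp
  qed
  note factor = quad_form_factor_through[OF A B'(2) this]
  obtain K1 where "K1 \<ge> 0" and K1: "\<And>x. cmod (quad_form n A x) \<le> K1 * sqnorm n x"
    using quad_form_bound by blast
  obtain K2 where "K2 \<ge> 0" and K2: "\<And>x. sqnorm n (mat_app n (mat_adj n G) x) \<le> K2 * sqnorm n x"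
    using sqnorm_mat_app_bound[of "mat_adj n G" n] unfolding mat_adj_def by auto
  obtain K3 where "K3 \<ge> 0" and K3: "\<And>x. sqnorm n (mat_app n B x) \<le> K3 * Re (quad_form n B x)"
    using psd_sqnorm_mat_app_bound[OF B] by blast
  have "Re (quad_form n A x) \<le> (K1 * K2 * K3) * Re (quad_form n B x)" for x
  proof -
    have "Re (quad_form n A x) \<le> K1 * sqnorm n (mat_app n (mat_adj n G) (mat_app n B x))"
      using factor[of x] K1 complex_Re_le_cmod order_trans by metis
    also have "\<dots> \<le> K1 * (K2 * sqnorm n (mat_app n B x))"
      using K2 \<open>K1 \<ge> 0\<close> by (rule mult_left_mono)
    also have "\<dots> \<le> K1 * (K2 * (K3 * Re (quad_form n B x)))"
      using K3 \<open>K1 \<ge> 0\<close> \<open>K2 \<ge> 0\<close> by (intro mult_left_mono) auto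
    finally show ?thesis by (simp add: mult.assoc)
  qed
  then show ?thesis using loewner_le_iff_quad_form[OF A B] by blast
qed

section \<open>Max-relative entropy\<close>

lemma density_loewner_factor_ge_1:
  assumes A: "density n A" and B: "density n B" and le: "loewner_le n A (complex_of_real t \<cdot>\<^sub>m B)"
  shows "1 \<le> t"
proof -
  define e where "e = (\<lambda>i j :: nat. of_bool (j = i) :: complex)"
  have carrier: "A \<in> carrier_mat n n" "B \<in> carrier_mat n n"
    using A B unfolding density_def psd_def by auto
  have "1 = Re (mtrace A)" using A unfolding density_def by simp
  also have "\<dots> = (\<Sum>i<n. Re (quad_form n A (e i)))"
    unfolding e_def mtrace_eq_sum_quad_form[OF carrier(1)] by simp
  also have "\<dots> \<le> (\<Sum>i<n. t * Re (quad_form n B (e i)))"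
    using le loewner_le_iff_quad_form A B unfolding density_def by (intro sum_mono) blast
  also have "\<dots> = t * Re (mtrace B)"
    unfolding e_def mtrace_eq_sum_quad_form[OF carrier(2)] by (simp add: sum_distrib_left)
  also have "\<dots> = t" using B unfolding density_def by simp
  finally show ?thesis .
qed

lemma density_Least_loewner_factor:
  assumes A: "density n A" and B: "density n B" and le: "loewner_le n A (complex_of_real t \<cdot>\<^sub>m B)"
  shows "loewner_le n A (complex_of_real (LEAST s. loewner_le n A (complex_of_real s \<cdot>\<^sub>m B)) \<cdot>\<^sub>m B)"
    and "(LEAST s. loewner_le n A (complex_of_real s \<cdot>\<^sub>m B)) \<le> t"
proof -
  have psd: "psd n A" "psd n B" using A B unfolding density_def by auto
  define S where "S = {s. loewner_le n A (complex_of_real s \<cdot>\<^sub>m B)}"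
  have S_iff: "s \<in> S \<longleftrightarrow> (\<forall>x. Re (quad_form n A x) \<le> s * Re (quad_form n B x))" for s
    unfolding S_def using loewner_le_iff_quad_form[OF psd] by simp
  have "t \<in> S" using le unfolding S_def by simp
  have "bdd_below S"
    using density_loewner_factor_ge_1[OF A B] unfolding S_def by (intro bdd_belowI[of _ 1]) auto
  have "Inf S \<in> S"
    unfolding S_iff
  proof
    fix x
    show "Re (quad_form n A x) \<le> Inf S * Re (quad_form n B x)"
    proof (cases "Re (quad_form n B x) = 0")
      case True
      then show ?thesis using \<open>t \<in> S\<close> unfolding S_iff by (metis mult_zero_right)
    next
      case False
      then have pos: "0 < Re (quad_form n B x)"
        using psd_quad_form_nonneg[OF psd(2)] by (simp add: order_less_le)
      have "Re (quad_form n A x) / Re (quad_form n B x) \<le> Inf S"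
      proof (rule cInf_greatest)
        show "S \<noteq> {}" using \<open>t \<in> S\<close> by blast
      next
        fix s assume "s \<in> S"
        then show "Re (quad_form n A x) / Re (quad_form n B x) \<le> s"
          using pos unfolding S_iff by (simp add: divide_le_eq)
      qed
      then show ?thesis using pos by (simp add: divide_le_eq mult.commute)
    qed
  qed
  moreover have "(LEAST s. s \<in> S) = Inf S"
    using \<open>Inf S \<in> S\<close> \<open>bdd_below S\<close> by (intro Least_equality) (auto intro: cInf_lower)
  moreover have "Inf S \<le> t" using cInf_lower[OF \<open>t \<in> S\<close> \<open>bdd_below S\<close>] .
  ultimately show "loewner_le n A (complex_of_real (LEAST s. loewner_le n A (complex_of_real s \<cdot>\<^sub>m B)) \<cdot>\<^sub>m B)"
    and "(LEAST s. loewner_le n A (complex_of_real s \<cdot>\<^sub>m B)) \<le> t"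
    unfolding S_def by auto
qed

lemma Dmax_st_le_log:
  assumes "density n \<rho>" "density n \<omega>" "loewner_le n \<rho> (complex_of_real t \<cdot>\<^sub>m \<omega>)"
  shows "Dmax_st n \<rho> \<omega> \<le> ereal (log 2 t)"
proof -
  let ?L = "LEAST s. loewner_le n \<rho> (complex_of_real s \<cdot>\<^sub>m \<omega>)"
  note Least = density_Least_loewner_factor[OF assms]
  have "supp n \<rho> \<subseteq> supp n \<omega>"
    using assms supp_subset_if_loewner_le unfolding density_def by blast
  moreover have "log 2 ?L \<le> log 2 t"
    using Least density_loewner_factor_ge_1[OF assms(1,2) Least(1)] by simp
  ultimately show ?thesis unfolding Dmax_st_def by simp
qed

lemma Dmax_st_cases:
  assumes "density n \<rho>" "density n \<omega>"
  obtains "Dmax_st n \<rho> \<omega> = \<infinity>"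
    | L where "1 \<le> L" "Dmax_st n \<rho> \<omega> = ereal (log 2 L)" "loewner_le n \<rho> (complex_of_real L \<cdot>\<^sub>m \<omega>)"
proof (cases "supp n \<rho> \<subseteq> supp n \<omega>")
  case True
  then obtain t where "loewner_le n \<rho> (complex_of_real t \<cdot>\<^sub>m \<omega>)"
    using loewner_le_if_supp_subset assms unfolding density_def by blast
  note Least = density_Least_loewner_factor(1)[OF assms this]
  show ?thesis
    using that(2)[OF density_loewner_factor_ge_1[OF assms Least] _ Least] True
    unfolding Dmax_st_def by simp
next
  case False
  then show ?thesis using that(1) unfolding Dmax_st_def by simp
qed

lemma Dmax_st_nonneg: "density n \<rho> \<Longrightarrow> density n \<omega> \<Longrightarrow> 0 \<le> Dmax_st n \<rho> \<omega>"
  by (erule Dmax_st_cases) auto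

section \<open>Channels\<close>

lemma is_channel_carrier: "is_channel dA dB M \<Longrightarrow> X \<in> carrier_mat dA dA \<Longrightarrow> M X \<in> carrier_mat dB dB"
  unfolding is_channel_def by blast

lemma tensor_id_1:
  assumes "X \<in> carrier_mat dA dA" "M X \<in> carrier_mat dB dB"
  shows "tensor_id 1 dA dB M X = M X"
proof -
  have "block dA X 0 0 = X" unfolding block_def using assms(1) by (intro eq_matI) auto
  then show ?thesis unfolding tensor_id_def using assms(2) by (intro eq_matI) auto
qed

lemma is_channel_psd:
  assumes "is_channel dA dB M" "psd dA X"
  shows "psd dB (M X)"
proof -
  have X: "X \<in> carrier_mat dA dA" using assms(2) unfolding psd_def by auto
  have "psd (1 * dA) X \<longrightarrow> psd (1 * dB) (tensor_id 1 dA dB M X)"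
    using assms(1) unfolding is_channel_def by blast
  then have "psd dB (tensor_id 1 dA dB M X)" using assms(2) by simp
  then show ?thesis using tensor_id_1[of X dA M dB, OF X is_channel_carrier[OF assms(1) X]] by simp
qed

lemma is_channel_density: "is_channel dA dB M \<Longrightarrow> density dA \<rho> \<Longrightarrow> density dB (M \<rho>)"
  unfolding density_def using is_channel_psd by (metis is_channel_def psd_def)

lemma is_channel_scale_diff:
  assumes M: "is_channel dA dB M" and X: "X \<in> carrier_mat dA dA" and Y: "Y \<in> carrier_mat dA dA"
  shows "M (c \<cdot>\<^sub>m X - Y) = c \<cdot>\<^sub>m M X - M Y"
proof -
  have MX: "M X \<in> carrier_mat dB dB" and MY: "M Y \<in> carrier_mat dB dB"
    using is_channel_carrier[OF M] X Y by auto
  have "c \<cdot>\<^sub>m X - Y = c \<cdot>\<^sub>m X + (-1) \<cdot>\<^sub>m Y" using X Y by (intro eq_matI) auto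
  then have "M (c \<cdot>\<^sub>m X - Y) = c \<cdot>\<^sub>m M X + (-1) \<cdot>\<^sub>m M Y"
    using M X Y unfolding is_channel_def by simp
  also have "\<dots> = c \<cdot>\<^sub>m M X - M Y" using MX MY by (intro eq_matI) auto
  finally show ?thesis .
qed

lemma is_channel_loewner_le:
  assumes "is_channel dA dB M" "X \<in> carrier_mat dA dA" "Y \<in> carrier_mat dA dA"
    and "loewner_le dA Y (c \<cdot>\<^sub>m X)"
  shows "loewner_le dB (M Y) (c \<cdot>\<^sub>m M X)"
  using is_channel_psd[OF assms(1) assms(4)[unfolded loewner_le_def]] is_channel_scale_diff[OF assms(1-3)]
  unfolding loewner_le_def by simp

lemma Dmax_st_le_Dmax_ch:
  assumes "density dA \<sigma>" "is_channel dA dB M" "is_channel dA dB N"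
  shows "Dmax_st dB (M \<sigma>) (N \<sigma>) \<le> Dmax_ch dA dB M N"
proof -
  have \<sigma>: "\<sigma> \<in> carrier_mat dA dA" using assms(1) unfolding density_def psd_def by auto
  have "Dmax_st (1 * dB) (tensor_id 1 dA dB M \<sigma>) (tensor_id 1 dA dB N \<sigma>) \<le> Dmax_ch dA dB M N"
    unfolding Dmax_ch_def using assms(1) by (intro SUP_upper2[of "(1, \<sigma>)"]) auto
  then show ?thesis
    using tensor_id_1[of \<sigma> dA M dB, OF \<sigma> is_channel_carrier[OF assms(2) \<sigma>]]
      tensor_id_1[of \<sigma> dA N dB, OF \<sigma> is_channel_carrier[OF assms(3) \<sigma>]] by simp
qed

lemma Dmax_ch_nonneg:
  assumes "density dA \<sigma>" "is_channel dA dB M" "is_channel dA dB N"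
  shows "0 \<le> Dmax_ch dA dB M N"
  using Dmax_st_nonneg[OF is_channel_density[OF assms(2,1)] is_channel_density[OF assms(3,1)]]
    Dmax_st_le_Dmax_ch[OF assms] by (rule order_trans)

lemma Dmax_st_channel_le:
  assumes M: "is_channel dA dB M"
    and \<rho>: "density dA \<rho>" and \<omega>: "density dA \<omega>" and \<sigma>: "density dB \<sigma>"
  shows "Dmax_st dB (M \<rho>) \<sigma> \<le> Dmax_st dA \<rho> \<omega> + Dmax_st dB (M \<omega>) \<sigma>"
proof -
  have M\<omega>: "density dB (M \<omega>)" using is_channel_density[OF M \<omega>] .
  show ?thesis
  proof (cases rule: Dmax_st_cases[OF \<rho> \<omega>])
    case (2 L)
    show ?thesis
    proof (cases rule: Dmax_st_cases[OF M\<omega> \<sigma>])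
      case (2 K)
      have carrier: "\<rho> \<in> carrier_mat dA dA" "\<omega> \<in> carrier_mat dA dA"
        using \<rho> \<omega> unfolding density_def psd_def by auto
      have "loewner_le dB (M \<rho>) (complex_of_real L \<cdot>\<^sub>m M \<omega>)"
        using is_channel_loewner_le[OF M carrier(2,1) \<open>loewner_le dA \<rho> _\<close>] .
      then have "loewner_le dB (M \<rho>) (complex_of_real (L * K) \<cdot>\<^sub>m \<sigma>)"
        using loewner_le_trans_scaled is_channel_density[OF M \<rho>] M\<omega> \<sigma> \<open>1 \<le> L\<close> 2(3)
        unfolding density_def by (metis order.trans zero_le_one)
      then have "Dmax_st dB (M \<rho>) \<sigma> \<le> ereal (log 2 (L * K))"
        by (rule Dmax_st_le_log[OF is_channel_density[OF M \<rho>] \<sigma>])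
      also have "\<dots> = Dmax_st dA \<rho> \<omega> + Dmax_st dB (M \<omega>) \<sigma>"
        using \<open>1 \<le> L\<close> \<open>1 \<le> K\<close> \<open>Dmax_st dA \<rho> \<omega> = _\<close> \<open>Dmax_st dB (M \<omega>) \<sigma> = _\<close> by (simp add: log_mult)
      finally show ?thesis .
    qed (use 2 in simp)
  qed simp
qed

theorem proposition1:
  fixes sdim :: "'s \<Rightarrow> nat"
    and FS :: "'s \<Rightarrow> complex mat set"
    and FC :: "'s \<Rightarrow> 's \<Rightarrow> (complex mat \<Rightarrow> complex mat) set"
    and A B :: 's
    and \<rho> :: "complex mat"
    and M :: "complex mat \<Rightarrow> complex mat"
  assumes "resource_theory sdim FS FC"
    and "density (sdim A) \<rho>"
    and "is_channel (sdim A) (sdim B) M"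
  shows "Dmax_free_st sdim FS B (M \<rho>) \<le> Dmax_free_st sdim FS A \<rho> + Dmax_free_ch sdim FC A B M"
proof -
  have free_state: "\<And>X \<omega>. \<omega> \<in> FS X \<Longrightarrow> density (sdim X) \<omega>"
    and free_channel: "\<And>N. N \<in> FC A B \<Longrightarrow> is_channel (sdim A) (sdim B) N"
    and free_closed: "\<And>N \<omega>. N \<in> FC A B \<Longrightarrow> \<omega> \<in> FS A \<Longrightarrow> N \<omega> \<in> FS B"
    using assms(1) unfolding resource_theory_def by blast+
  have "Dmax_free_st sdim FS B (M \<rho>) \<le> Dmax_st (sdim A) \<rho> \<omega> + Dmax_ch (sdim A) (sdim B) M N"
    if \<omega>: "\<omega> \<in> FS A" and N: "N \<in> FC A B" for \<omega> N
  proof -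
    have "Dmax_free_st sdim FS B (M \<rho>) \<le> Dmax_st (sdim B) (M \<rho>) (N \<omega>)"
      unfolding Dmax_free_st_def using free_closed[OF N \<omega>] by (rule INF_lower)
    also have "\<dots> \<le> Dmax_st (sdim A) \<rho> \<omega> + Dmax_st (sdim B) (M \<omega>) (N \<omega>)"
      by (rule Dmax_st_channel_le[OF assms(3,2) free_state[OF \<omega>] free_state[OF free_closed[OF N \<omega>]]])
    also have "\<dots> \<le> Dmax_st (sdim A) \<rho> \<omega> + Dmax_ch (sdim A) (sdim B) M N"
      using Dmax_st_le_Dmax_ch[OF free_state[OF \<omega>] assms(3) free_channel[OF N]] by (rule add_left_mono)
    finally show ?thesis .
  qed
  then show ?thesis
    unfolding Dmax_free_st_def Dmax_free_ch_def
    using Dmax_st_nonneg[OF assms(2) free_state] Dmax_ch_nonneg[OF assms(2,3) free_channel]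
    by (intro ereal_le_INF_add_INF) auto
qed

end
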